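(* Let $m,n$ be positive integers. (1) If $n$ is odd, $m$ is odd, and at least one of $m,n$ is larger than $1$, then there is no nullhomotopic knight's tour on $\mathcal{M}_{m,n}$ and no nullhomotopic knight's tour on $\mathcal{K}_{m,n}$. (2) Suppose $n$ is even. If $m$ is even, there is no generating knight's tour on $\mathcal{M}_{m,n}$ and no Möbius knight's tour on $\mathcal{K}_{m,n}$. If $m$ is odd, there is no cylindrical knight's tour on $\mathcal{K}_{m,n}$.
   Context: Let $\mathcal{P}$ be the graph with vertex set $\mathbb{Z}^2$ in which $(a,b)$ and $(a',b')$ are adjacent iff $\{|a-a'|,|b-b'|\}=\{1,2\}$, and let $\mathcal{S}_m$ be its induced subgraph on $\{(a,b): 0\le a<m\}$. Let $\tau(a,b)=(a+m,b)$ and $\sigma(a,b)=(m-1-a,\,b+n)$. Define the multigraph $\mathcal{M}_{m,n}=\mathcal{S}_m/\langle\sigma\rangle$ and the pseudograph $\mathcal{K}_{m,n}=\mathcal{P}/\langle\tau,\sigma\rangle$ (vertices and edges are orbits of vertices and edges under these free actions; multiple edges and loops may occur); these are the knight's move graphs of the $m\times n$ Möbius strip and Klein bottle boards, and the quotient maps are coverings. A knight's tour is a closed walk visiting every vertex exactly once apart from the repeated start/end vertex (a Hamiltonian cycle). Regard a tour as a closed walk based at vertex $(0,0)$ and take its unique lift (to $\mathcal{S}_m$, resp. $\mathcal{P}$) starting at $(0,0)$. A tour on $\mathcal{M}_{m,n}$ is nullhomotopic if the lift ends at $(0,0)$ and generating if it ends at $(m-1,\pm n)$. A tour on $\mathcal{K}_{m,n}$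 is nullhomotopic if the lift ends at $(0,0)$, cylindrical if it ends at $(\pm m,0)$, and Möbius if it ends at $(m-1,\pm n)$. *)

theory Defs
  imports Main
begin

definition knight_adj :: "int \<times> int \<Rightarrow> int \<times> int \<Rightarrow> bool" where
  "knight_adj p q \<longleftrightarrow> {\<bar>fst p - fst q\<bar>, \<bar>snd p - snd q\<bar>} = {1, 2}"

definition tau :: "int \<Rightarrow> int \<times> int \<Rightarrow> int \<times> int" where
  "tau m p = (fst p + m, snd p)"

definition sigma :: "int \<Rightarrow> int \<Rightarrow> int \<times> int \<Rightarrow> int \<times> int" where
  "sigma m n p = (m - 1 - fst p, snd p + n)"

definition sigma_pow :: "int \<Rightarrow> int \<Rightarrow> int \<Rightarrow> int \<times> int \<Rightarrow> int \<times> int" where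
  "sigma_pow m n k p =
     (if k \<ge> 0 then (sigma m n ^^ nat k) p
      else (inv (sigma m n) ^^ nat (- k)) p)"

definition tau_pow :: "int \<Rightarrow> int \<Rightarrow> int \<times> int \<Rightarrow> int \<times> int" where
  "tau_pow m j p = (fst p + j * m, snd p)"

text \<open>Same vertex of the Moebius board M_{m,n}: same orbit under <sigma>.\<close>
definition mob_equiv :: "int \<Rightarrow> int \<Rightarrow> int \<times> int \<Rightarrow> int \<times> int \<Rightarrow> bool" where
  "mob_equiv m n p q \<longleftrightarrow> (\<exists>k::int. q = sigma_pow m n k p)"

text \<open>Same vertex of the Klein bottle board K_{m,n}: same orbit under <tau, sigma>.
  Since sigma tau sigma^-1 = tau^-1, every group element has the form tau^j sigma^k.\<close>
definition klein_equiv :: "int \<Rightarrow> int \<Rightarrow> int \<times> int \<Rightarrow> int \<times> int \<Rightarrow> bool" where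
  "klein_equiv m n p q \<longleftrightarrow> (\<exists>j k::int. q = tau_pow m j (sigma_pow m n k p))"

text \<open>Lift (to S_m, starting at (0,0)) of a knight's tour (Hamiltonian closed walk) on M_{m,n}
  based at the vertex [(0,0)], of length N: consecutive lifted points are knight-adjacent
  and lie in the strip 0 <= a < m; the first N points project to pairwise distinct vertices
  covering every vertex of M_{m,n}; and the last point projects to the start vertex.\<close>
definition mob_tour_lift :: "int \<Rightarrow> int \<Rightarrow> (nat \<Rightarrow> int \<times> int) \<Rightarrow> nat \<Rightarrow> bool" where
  "mob_tour_lift m n p N \<longleftrightarrow>
     p 0 = (0, 0) \<and>
     (\<forall>i\<le>N. 0 \<le> fst (p i) \<and> fst (p i) < m) \<and>
     (\<forall>i<N. knight_adj (p i) (p (Suc i))) \<and>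
     (\<forall>i<N. \<forall>j<N. i \<noteq> j \<longrightarrow> \<not> mob_equiv m n (p i) (p j)) \<and>
     (\<forall>q. 0 \<le> fst q \<and> fst q < m \<longrightarrow> (\<exists>i<N. mob_equiv m n (p i) q)) \<and>
     mob_equiv m n (p 0) (p N)"

text \<open>Same for K_{m,n}, lifted to the full plane graph P.\<close>
definition klein_tour_lift :: "int \<Rightarrow> int \<Rightarrow> (nat \<Rightarrow> int \<times> int) \<Rightarrow> nat \<Rightarrow> bool" where
  "klein_tour_lift m n p N \<longleftrightarrow>
     p 0 = (0, 0) \<and>
     (\<forall>i<N. knight_adj (p i) (p (Suc i))) \<and>
     (\<forall>i<N. \<forall>j<N. i \<noteq> j \<longrightarrow> \<not> klein_equiv m n (p i) (p j)) \<and>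
     (\<forall>q. \<exists>i<N. klein_equiv m n (p i) q) \<and>
     klein_equiv m n (p 0) (p N)"

definition mob_tour_ending_at :: "int \<Rightarrow> int \<Rightarrow> int \<times> int \<Rightarrow> bool" where
  "mob_tour_ending_at m n e \<longleftrightarrow> (\<exists>p N. mob_tour_lift m n p N \<and> p N = e)"

definition klein_tour_ending_at :: "int \<Rightarrow> int \<Rightarrow> int \<times> int \<Rightarrow> bool" where
  "klein_tour_ending_at m n e \<longleftrightarrow> (\<exists>p N. klein_tour_lift m n p N \<and> p N = e)"

definition nullhomotopic_mob_tour_exists :: "int \<Rightarrow> int \<Rightarrow> bool" where
  "nullhomotopic_mob_tour_exists m n \<longleftrightarrow> mob_tour_ending_at m n (0, 0)"

definition generating_mob_tour_exists :: "int \<Rightarrow> int \<Rightarrow> bool" where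
  "generating_mob_tour_exists m n \<longleftrightarrow>
     mob_tour_ending_at m n (m - 1, n) \<or> mob_tour_ending_at m n (m - 1, - n)"

definition nullhomotopic_klein_tour_exists :: "int \<Rightarrow> int \<Rightarrow> bool" where
  "nullhomotopic_klein_tour_exists m n \<longleftrightarrow> klein_tour_ending_at m n (0, 0)"

definition cylindrical_klein_tour_exists :: "int \<Rightarrow> int \<Rightarrow> bool" where
  "cylindrical_klein_tour_exists m n \<longleftrightarrow>
     klein_tour_ending_at m n (m, 0) \<or> klein_tour_ending_at m n (- m, 0)"

definition moebius_klein_tour_exists :: "int \<Rightarrow> int \<Rightarrow> bool" where
  "moebius_klein_tour_exists m n \<longleftrightarrow>
     klein_tour_ending_at m n (m - 1, n) \<or> klein_tour_ending_at m n (m - 1, - n)"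

end

theory Submission
  imports Defs
begin

text \<open>
  Every knight move changes the parity of \<open>a + b\<close>, so the lift of a walk of length
  \<open>N\<close> from \<open>(0, 0)\<close> ends at a point with \<open>a + b \<equiv> N (mod 2)\<close>. The rectangle
  \<open>[0, m) \<times> [0, n)\<close> is a fundamental domain both for \<open>\<langle>\<sigma>\<rangle>\<close> acting on the strip and for
  \<open>\<langle>\<tau>, \<sigma>\<rangle>\<close> acting on the plane, so a knight's tour has exactly \<open>N = m n\<close> moves.
  Hence a tour can only end at points with \<open>a + b \<equiv> m n (mod 2)\<close>, and every end point
  excluded by the proposition has the wrong parity.
\<close>

lemma sigma_iterate: "(sigma m n ^^ k) p = (if even k then fst p else m - 1 - fst p, snd p + int k * n)"
  by (induction k) (auto simp: sigma_def algebra_simps)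

lemma inv_sigma: "inv (sigma m n) p = (m - 1 - fst p, snd p - n)"
  by (rule inv_f_eq) (auto simp: sigma_def inj_def)

lemma inv_sigma_iterate:
  "(inv (sigma m n) ^^ k) p = (if even k then fst p else m - 1 - fst p, snd p - int k * n)"
  by (induction k) (auto simp: inv_sigma algebra_simps)

lemma sigma_pow_conv: "sigma_pow m n k p = (if even k then fst p else m - 1 - fst p, snd p + k * n)"
  by (cases "k \<ge> 0") (auto simp: sigma_pow_def sigma_iterate inv_sigma_iterate even_nat_iff)

lemma sigma_pow_add: "sigma_pow m n k (sigma_pow m n l p) = sigma_pow m n (k + l) p"
  by (auto simp: sigma_pow_conv algebra_simps)

lemma sigma_pow_zero: "sigma_pow m n 0 p = p"
  by (simp add: sigma_pow_conv)

lemma tau_pow_add: "tau_pow m j (tau_pow m i p) = tau_pow m (j + i) p"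
  by (simp add: tau_pow_def algebra_simps)

lemma tau_pow_zero: "tau_pow m 0 p = p"
  by (simp add: tau_pow_def)

lemma sigma_pow_tau_pow:
  "sigma_pow m n k (tau_pow m j p) = tau_pow m (if even k then j else - j) (sigma_pow m n k p)"
  by (simp add: sigma_pow_conv tau_pow_def algebra_simps)

lemma mob_equiv_sym: "mob_equiv m n p q \<Longrightarrow> mob_equiv m n q p"
  unfolding mob_equiv_def by (metis sigma_pow_add sigma_pow_zero add.left_inverse)

lemma mob_equiv_trans: "mob_equiv m n p q \<Longrightarrow> mob_equiv m n q r \<Longrightarrow> mob_equiv m n p r"
  unfolding mob_equiv_def by (metis sigma_pow_add)

lemma klein_equiv_sym: "klein_equiv m n p q \<Longrightarrow> klein_equiv m n q p"
proof -
  assume "klein_equiv m n p q"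
  then obtain j k where q: "q = tau_pow m j (sigma_pow m n k p)"
    unfolding klein_equiv_def by blast
  have "p = sigma_pow m n (- k) (tau_pow m (- j) q)"
    by (simp add: q tau_pow_add tau_pow_zero sigma_pow_add sigma_pow_zero)
  then show ?thesis
    unfolding klein_equiv_def sigma_pow_tau_pow by blast
qed

lemma klein_equiv_trans:
  "klein_equiv m n p q \<Longrightarrow> klein_equiv m n q r \<Longrightarrow> klein_equiv m n p r"
proof -
  assume "klein_equiv m n p q" "klein_equiv m n q r"
  then obtain i j k l where "q = tau_pow m i (sigma_pow m n k p)" "r = tau_pow m j (sigma_pow m n l q)"
    unfolding klein_equiv_def by blast
  then have "r = tau_pow m (j + (if even l then i else - i)) (sigma_pow m n (l + k) p)"
    by (simp add: sigma_pow_tau_pow tau_pow_add sigma_pow_add)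
  then show ?thesis
    unfolding klein_equiv_def by blast
qed

lemma card_eq_card_transversal:
  assumes sym: "\<And>x y. R x y \<Longrightarrow> R y x"
    and trans: "\<And>x y z. R x y \<Longrightarrow> R y z \<Longrightarrow> R x z"
    and rep: "\<And>i. i \<in> A \<Longrightarrow> \<exists>d\<in>D. R (p i) d"
    and rep_unique: "\<And>d d'. d \<in> D \<Longrightarrow> d' \<in> D \<Longrightarrow> R d d' \<Longrightarrow> d = d'"
    and inequivalent: "\<And>i j. i \<in> A \<Longrightarrow> j \<in> A \<Longrightarrow> R (p i) (p j) \<Longrightarrow> i = j"
    and cover: "\<And>d. d \<in> D \<Longrightarrow> \<exists>i\<in>A. R (p i) d"
  shows "card A = card D"
proof -
  obtain g where g: "\<And>i. i \<in> A \<Longrightarrow> g i \<in> D \<and> R (p i) (g i)"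
    using rep by metis
  have "bij_betw g A D"
  proof (rule bij_betwI')
    fix i j assume "i \<in> A" "j \<in> A"
    then show "g i = g j \<longleftrightarrow> i = j"
      using g inequivalent sym trans by metis
  next
    fix i assume "i \<in> A"
    then show "g i \<in> D" using g by blast
  next
    fix d assume "d \<in> D"
    then obtain i where "i \<in> A" "R (p i) d" using cover by blast
    then have "g i = d" using g rep_unique sym trans \<open>d \<in> D\<close> by metis
    then show "\<exists>i\<in>A. d = g i" using \<open>i \<in> A\<close> by blast
  qed
  then show ?thesis by (rule bij_betw_same_card)
qed

definition board :: "int \<Rightarrow> int \<Rightarrow> (int \<times> int) set" where
  "board m n = {0..<m} \<times> {0..<n}"

lemma card_board: "0 \<le> m \<Longrightarrow> 0 \<le> n \<Longrightarrow> int (card (board m n)) = m * n"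
  by (simp add: board_def card_cartesian_product)

lemma shift_in_interval_eq_zero:
  fixes a k n :: int
  assumes "0 \<le> a" "a < n" "0 \<le> a + k * n" "a + k * n < n"
  shows "k = 0"
proof -
  have "- n < k * n" "k * n < 1 * n" using assms by linarith+
  then have "- 1 < k" "k < 1"
    using mult_less_cancel_right[of "- 1" n k] mult_less_cancel_right[of k n 1] assms by auto
  then show ?thesis by linarith
qed

lemma mob_equiv_board_rep:
  assumes "0 < n" "0 \<le> fst p" "fst p < m"
  shows "\<exists>d\<in>board m n. mob_equiv m n p d"
proof -
  have "sigma_pow m n (- (snd p div n)) p \<in> board m n"
    using assms by (simp add: board_def sigma_pow_conv minus_div_mult_eq_mod)
  then show ?thesis unfolding mob_equiv_def by blast
qed

lemma klein_equiv_board_rep: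
  assumes "0 < m" "0 < n"
  shows "\<exists>d\<in>board m n. klein_equiv m n p d"
proof -
  define s where "s = sigma_pow m n (- (snd p div n)) p"
  have "tau_pow m (- (fst s div m)) s \<in> board m n"
    using assms by (simp add: board_def s_def sigma_pow_conv tau_pow_def minus_div_mult_eq_mod)
  then show ?thesis unfolding klein_equiv_def s_def by blast
qed

lemma mob_equiv_board_unique:
  assumes "d \<in> board m n" "d' \<in> board m n" "mob_equiv m n d d'"
  shows "d = d'"
proof -
  obtain k where d': "d' = sigma_pow m n k d"
    using assms(3) unfolding mob_equiv_def by blast
  then have "k = 0"
    using assms(1,2) shift_in_interval_eq_zero[of "snd d" n k]
    by (simp add: board_def sigma_pow_conv mem_Times_iff)
  then show ?thesis by (simp add: d' sigma_pow_zero)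
qed

lemma klein_equiv_board_unique:
  assumes "d \<in> board m n" "d' \<in> board m n" "klein_equiv m n d d'"
  shows "d = d'"
proof -
  obtain j k where d': "d' = tau_pow m j (sigma_pow m n k d)"
    using assms(3) unfolding klein_equiv_def by blast
  then have "k = 0"
    using assms(1,2) shift_in_interval_eq_zero[of "snd d" n k]
    by (simp add: board_def sigma_pow_conv tau_pow_def mem_Times_iff)
  then have "j = 0"
    using d' assms(1,2) shift_in_interval_eq_zero[of "fst d" m j]
    by (simp add: board_def sigma_pow_conv tau_pow_def mem_Times_iff)
  with \<open>k = 0\<close> show ?thesis by (simp add: d' sigma_pow_zero tau_pow_zero)
qed

lemma mob_tour_length:
  assumes "0 < n" and tour: "mob_tour_lift m n p N"
  shows "int N = m * n"
proof -
  have "card {..<N} = card (board m n)"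
  proof (rule card_eq_card_transversal[where R = "mob_equiv m n" and p = p])
    fix i assume "i \<in> {..<N}"
    then show "\<exists>d\<in>board m n. mob_equiv m n (p i) d"
      using assms mob_equiv_board_rep unfolding mob_tour_lift_def by simp
  next
    fix i j assume "i \<in> {..<N}" "j \<in> {..<N}" "mob_equiv m n (p i) (p j)"
    then show "i = j" using tour unfolding mob_tour_lift_def by blast
  next
    fix d assume "d \<in> board m n"
    then show "\<exists>i\<in>{..<N}. mob_equiv m n (p i) d"
      using tour unfolding mob_tour_lift_def board_def by (force simp: mem_Times_iff)
  qed (fact mob_equiv_sym mob_equiv_trans mob_equiv_board_unique)+
  moreover have "0 < m"
    using tour unfolding mob_tour_lift_def by force
  ultimately show ?thesis using assms(1) card_board[of m n] by simp
qed

lemma klein_tour_length: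
  assumes "0 < m" "0 < n" and tour: "klein_tour_lift m n p N"
  shows "int N = m * n"
proof -
  have "card {..<N} = card (board m n)"
  proof (rule card_eq_card_transversal[where R = "klein_equiv m n" and p = p])
    fix i j assume "i \<in> {..<N}" "j \<in> {..<N}" "klein_equiv m n (p i) (p j)"
    then show "i = j" using tour unfolding klein_tour_lift_def by blast
  next
    fix d assume "d \<in> board m n"
    then show "\<exists>i\<in>{..<N}. klein_equiv m n (p i) d"
      using tour unfolding klein_tour_lift_def by (metis lessThan_iff)
  qed (rule klein_equiv_board_rep[OF assms(1,2)]
       | fact klein_equiv_sym klein_equiv_trans klein_equiv_board_unique)+
  then show ?thesis using assms(1,2) card_board[of m n] by simp
qed

lemma knight_adj_parity: "knight_adj p q \<Longrightarrow> even (fst q + snd q) \<longleftrightarrow> odd (fst p + snd p)"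
proof -
  assume "knight_adj p q"
  then have "\<bar>fst p - fst q\<bar> + \<bar>snd p - snd q\<bar> = 3"
    unfolding knight_adj_def doubleton_eq_iff by auto
  then have "odd (\<bar>fst p - fst q\<bar> + \<bar>snd p - snd q\<bar>)" by simp
  then show ?thesis by auto
qed

lemma knight_walk_parity:
  assumes "\<forall>i<N. knight_adj (p i) (p (Suc i))" "i \<le> N"
  shows "even (fst (p i) + snd (p i)) \<longleftrightarrow> even (fst (p 0) + snd (p 0) + int i)"
  using assms(2)
proof (induction i)
  case 0
  then show ?case by simp
next
  case (Suc i)
  then have "knight_adj (p i) (p (Suc i))" using assms(1) by simp
  then have "even (fst (p (Suc i)) + snd (p (Suc i))) \<longleftrightarrow> odd (fst (p i) + snd (p i))"
    by (rule knight_adj_parity)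
  also have "\<dots> \<longleftrightarrow> odd (fst (p 0) + snd (p 0) + int i)"
    using Suc by simp
  finally show ?case by simp
qed

lemma mob_tour_end_parity:
  assumes "0 < n" "mob_tour_ending_at m n e"
  shows "even (fst e + snd e) \<longleftrightarrow> even (m * n)"
proof -
  obtain p N where tour: "mob_tour_lift m n p N" and "p N = e"
    using assms(2) unfolding mob_tour_ending_at_def by blast
  then have "even (fst e + snd e) \<longleftrightarrow> even (int N)"
    using knight_walk_parity[of N p N] unfolding mob_tour_lift_def by simp
  also have "int N = m * n"
    by (rule mob_tour_length[OF assms(1) tour])
  finally show ?thesis .
qed

lemma klein_tour_end_parity:
  assumes "0 < m" "0 < n" "klein_tour_ending_at m n e"
  shows "even (fst e + snd e) \<longleftrightarrow> even (m * n)"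
proof -
  obtain p N where tour: "klein_tour_lift m n p N" and "p N = e"
    using assms(3) unfolding klein_tour_ending_at_def by blast
  then have "even (fst e + snd e) \<longleftrightarrow> even (int N)"
    using knight_walk_parity[of N p N] unfolding klein_tour_lift_def by simp
  also have "int N = m * n"
    by (rule klein_tour_length[OF assms(1,2) tour])
  finally show ?thesis .
qed

theorem proposition3p5:
  fixes m n :: int
  assumes "0 < m" and "0 < n"
  shows "(odd n \<and> odd m \<and> (1 < m \<or> 1 < n) \<longrightarrow>
            \<not> nullhomotopic_mob_tour_exists m n \<and> \<not> nullhomotopic_klein_tour_exists m n)
       \<and> (even n \<longrightarrow>
            (even m \<longrightarrow> \<not> generating_mob_tour_exists m n \<and> \<not> moebius_klein_tour_exists m n)
          \<and> (odd m \<longrightarrow> \<not> cylindrical_klein_tour_exists m n))"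
proof -
  have mob: "even (a + b) \<longleftrightarrow> even (m * n)" if "mob_tour_ending_at m n (a, b)" for a b
    using mob_tour_end_parity[OF assms(2) that] by simp
  have klein: "even (a + b) \<longleftrightarrow> even (m * n)" if "klein_tour_ending_at m n (a, b)" for a b
    using klein_tour_end_parity[OF assms that] by simp
  have "odd m \<Longrightarrow> odd n \<Longrightarrow>
      \<not> mob_tour_ending_at m n (0, 0) \<and> \<not> klein_tour_ending_at m n (0, 0)"
    using mob[of 0 0] klein[of 0 0] by auto
  moreover have "even m \<Longrightarrow> even n \<Longrightarrow>
      \<not> mob_tour_ending_at m n (m - 1, n) \<and> \<not> mob_tour_ending_at m n (m - 1, - n) \<and>
      \<not> klein_tour_ending_at m n (m - 1, n) \<and> \<not> klein_tour_ending_at m n (m - 1, - n)"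
    using mob[of "m - 1" n] mob[of "m - 1" "- n"] klein[of "m - 1" n] klein[of "m - 1" "- n"]
    by auto
  moreover have "odd m \<Longrightarrow> even n \<Longrightarrow>
      \<not> klein_tour_ending_at m n (m, 0) \<and> \<not> klein_tour_ending_at m n (- m, 0)"
    using klein[of m 0] klein[of "- m" 0] by auto
  ultimately show ?thesis
    unfolding nullhomotopic_mob_tour_exists_def nullhomotopic_klein_tour_exists_def
      generating_mob_tour_exists_def moebius_klein_tour_exists_def cylindrical_klein_tour_exists_def
    by blast
qed

end
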